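(* Consider an instance of the constructive \$-protection problem (all voter weights equal to 1) and let $\mathcal{V}_F\subseteq\mathcal{V}$ be the set of awarded voters. Suppose the attacker can make the designated candidate $c^\star$ win (obtain a total score strictly higher than every other candidate) by bribing a set $\mathcal{V}_B\subseteq\mathcal{V}\setminus\mathcal{V}_F$ with $\sum_{v_j\in\mathcal{V}_B}p_j^b\le B$. If $v_{j'}\prec v_j$, $v_{j'}\in\mathcal{V}_B$ and $v_j\notin\mathcal{V}_F\cup\mathcal{V}_B$, then the attacker can also make $c^\star$ win by bribing $(\mathcal{V}_B\setminus\{v_{j'}\})\cup\{v_j\}$ (within budget $B$).
   Context: Election model. Candidates $\mathcal{C}=\{c_1,\dots,c_m\}$, voters $\mathcal{V}=\{v_1,\dots,v_n\}$; voter $v_j$ has a preference list $\tau_j$ (a linear order of $\mathcal{C}$), weight $w_j$, awarding price $p_j^a\in\mathbb{Z}_{>0}$, bribing price $p_j^b\in\mathbb{Z}_{>0}$. A scoring rule $\alpha=(\alpha_1\ge\cdots\ge\alpha_m)$ of nonnegative integers gives the candidate at position $z$ of $v_j$'s list $w_j\alpha_z$ points; total score is the sum over voters. In the constructive \$-protection problem all $w_j=1$, there is a designated candidate $c^\star$, a defense budget $F$ and an attack budget $B$; the attacker may choose $\mathcal{V}_B\subseteq\mathcal{V}\setminus\mathcal{V}_F$ with total bribing price at most $B$ and replace each list in $\mathcal{V}_B$ by an arbitrary list. Dominance: $v_{j'}\prec v_j$ if either (i) $\tau_j=\tau_{j'}$, $w_j\ge w_{j'}$, $p_j^a\le p_{j'}^a$,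 $p_j^b\le p_{j'}^b$ with at least one of these three inequalities strict; or (ii) $\tau_j=\tau_{j'}$, $w_j=w_{j'}$, $p_j^a=p_{j'}^a$, $p_j^b=p_{j'}^b$ and $j'<j$. *)

theory Defs
  imports Main
begin

text \<open>A preference list is a linear order of the candidate set C, represented as a
list without repetitions containing exactly the candidates of C (first = most preferred).\<close>
definition is_pref :: "'c set \<Rightarrow> 'c list \<Rightarrow> bool" where
  "is_pref C l \<longleftrightarrow> distinct l \<and> set l = C"

text \<open>Points given by list l to candidate c under scoring rule alpha (positions are 1-based:
the candidate at position z receives alpha z points, times the voter weight).\<close>
definition points :: "(nat \<Rightarrow> nat) \<Rightarrow> 'c list \<Rightarrow> 'c \<Rightarrow> nat" where
  "points alpha l c = (\<Sum>i<length l. if l ! i = c then alpha (Suc i) else 0)"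

definition score :: "(nat \<Rightarrow> nat) \<Rightarrow> (nat \<Rightarrow> nat) \<Rightarrow> nat set \<Rightarrow> (nat \<Rightarrow> 'c list) \<Rightarrow> 'c \<Rightarrow> nat" where
  "score alpha w V tau c = (\<Sum>j\<in>V. w j * points alpha (tau j) c)"

definition wins :: "(nat \<Rightarrow> nat) \<Rightarrow> (nat \<Rightarrow> nat) \<Rightarrow> 'c set \<Rightarrow> nat set \<Rightarrow> (nat \<Rightarrow> 'c list) \<Rightarrow> 'c \<Rightarrow> bool" where
  "wins alpha w C V tau c \<longleftrightarrow> (\<forall>d\<in>C - {c}. score alpha w V tau d < score alpha w V tau c)"

definition can_win_by :: "(nat \<Rightarrow> nat) \<Rightarrow> (nat \<Rightarrow> nat) \<Rightarrow> 'c set \<Rightarrow> nat set \<Rightarrow> (nat \<Rightarrow> 'c list) \<Rightarrow> 'c \<Rightarrow> nat set \<Rightarrow> bool" where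
  "can_win_by alpha w C V tau c VB \<longleftrightarrow>
     (\<exists>tau'. (\<forall>j\<in>VB. is_pref C (tau' j)) \<and>
             wins alpha w C V (\<lambda>j. if j \<in> VB then tau' j else tau j) c)"

text \<open>Dominance: dominated w tau pa pb j' j means v_j' \<prec> v_j.\<close>
definition dominated :: "(nat \<Rightarrow> nat) \<Rightarrow> (nat \<Rightarrow> 'c list) \<Rightarrow> (nat \<Rightarrow> nat) \<Rightarrow> (nat \<Rightarrow> nat) \<Rightarrow> nat \<Rightarrow> nat \<Rightarrow> bool" where
  "dominated w tau pa pb j' j \<longleftrightarrow>
     (tau j = tau j' \<and> w j \<ge> w j' \<and> pa j \<le> pa j' \<and> pb j \<le> pb j' \<and>
        (w j > w j' \<or> pa j < pa j' \<or> pb j < pb j'))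
   \<or> (tau j = tau j' \<and> w j = w j' \<and> pa j = pa j' \<and> pb j = pb j' \<and> j' < j)"

end

theory Submission
  imports Defs "HOL-Combinatorics.Transposition"
begin

text \<open>Voters with the same list and the same weight are interchangeable: transposing
  them is a permutation of the electorate, which changes no score. So if the attacker
  bribes \<open>v\<^sub>j\<^sub>'\<close>, it can bribe \<open>v\<^sub>j\<close> instead, casting for \<open>v\<^sub>j\<close> the list it cast for
  \<open>v\<^sub>j\<^sub>'\<close>; the resulting profile is the old one with \<open>j\<close> and \<open>j'\<close> transposed, and the
  cost does not increase because \<open>v\<^sub>j\<close> is at most as expensive.\<close>

lemma sum_exchange_le:
  fixes f :: "'a \<Rightarrow> 'b::ordered_comm_monoid_add"
  assumes "finite A" "a \<in> A" "b \<notin> A" "f b \<le> f a"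
  shows "sum f (insert b (A - {a})) \<le> sum f A"
proof -
  have "sum f (insert b (A - {a})) = f b + sum f (A - {a})"
    using assms(1,3) by simp
  also have "\<dots> \<le> f a + sum f (A - {a})"
    using assms(4) by (rule add_right_mono)
  also have "\<dots> = sum f A"
    using assms(1,2) by (simp add: sum.remove)
  finally show ?thesis .
qed

lemma score_reindex:
  assumes "bij_betw \<pi> V V"
  shows "score alpha (w \<circ> \<pi>) V (tau \<circ> \<pi>) c = score alpha w V tau c"
  unfolding score_def
  using sum.reindex_bij_betw[OF assms, of "\<lambda>j. w j * points alpha (tau j) c"] by simp

lemma wins_reindex:
  assumes "bij_betw \<pi> V V"
  shows "wins alpha (w \<circ> \<pi>) C V (tau \<circ> \<pi>) c \<longleftrightarrow> wins alpha w C V tau c"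
  by (simp add: wins_def score_reindex[OF assms])

lemma can_win_by_exchange:
  assumes win: "can_win_by alpha w C V tau c VB"
    and VB_sub: "VB \<subseteq> V" and j'_in: "j' \<in> VB" and j_in: "j \<in> V" and j_notin: "j \<notin> VB"
    and same_list: "tau j = tau j'" and same_weight: "w j = w j'"
  shows "can_win_by alpha w C V tau c (insert j (VB - {j'}))"
proof -
  obtain tau' where prefs: "\<forall>i\<in>VB. is_pref C (tau' i)"
    and wins_old: "wins alpha w C V (\<lambda>i. if i \<in> VB then tau' i else tau i) c"
    using win by (auto simp: can_win_by_def)
  define tau'' where "tau'' = tau'(j := tau' j')"
  have profile_eq: "(\<lambda>i. if i \<in> insert j (VB - {j'}) then tau'' i else tau i)
      = (\<lambda>i. if i \<in> VB then tau' i else tau i) \<circ> transpose j j'"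
    using j'_in j_notin same_list by (auto simp: tau''_def transpose_def)
  have weight_eq: "w \<circ> transpose j j' = w"
    using same_weight by (auto simp: transpose_def)
  have "bij_betw (transpose j j') V V"
    using VB_sub j'_in j_in by auto
  then have "wins alpha w C V (\<lambda>i. if i \<in> insert j (VB - {j'}) then tau'' i else tau i) c"
    using wins_old wins_reindex[of "transpose j j'" V alpha w C] by (simp only: profile_eq weight_eq)
  moreover have "\<forall>i\<in>insert j (VB - {j'}). is_pref C (tau'' i)"
    using prefs j'_in by (auto simp: tau''_def)
  ultimately show ?thesis
    unfolding can_win_by_def by blast
qed

theorem lemma7:
  fixes C :: "'c set" and cstar :: 'c and alpha :: "nat \<Rightarrow> nat"
    and n :: nat and tau :: "nat \<Rightarrow> 'c list" and pa pb :: "nat \<Rightarrow> nat"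
    and F B :: nat and VF VB :: "nat set" and j j' :: nat
  assumes C_fin: "finite C" and cstar_in: "cstar \<in> C"
    and alpha_mono: "\<And>z z'. 1 \<le> z \<Longrightarrow> z \<le> z' \<Longrightarrow> z' \<le> card C \<Longrightarrow> alpha z' \<le> alpha z"
    and prefs: "\<And>i. i \<in> {..<n} \<Longrightarrow> is_pref C (tau i)"
    and pa_pos: "\<And>i. i \<in> {..<n} \<Longrightarrow> pa i > 0"
    and pb_pos: "\<And>i. i \<in> {..<n} \<Longrightarrow> pb i > 0"
    and VF_sub: "VF \<subseteq> {..<n}" and VF_budget: "(\<Sum>i\<in>VF. pa i) \<le> F"
    and VB_sub: "VB \<subseteq> {..<n} - VF" and VB_budget: "(\<Sum>i\<in>VB. pb i) \<le> B"
    and VB_win: "can_win_by alpha (\<lambda>_. 1) C {..<n} tau cstar VB"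
    and dom: "dominated (\<lambda>_. 1) tau pa pb j' j"
    and j'_in: "j' \<in> VB"
    and j_in: "j \<in> {..<n}" and j_notin: "j \<notin> VF \<union> VB"
  shows "(VB - {j'}) \<union> {j} \<subseteq> {..<n} - VF
       \<and> (\<Sum>i\<in>(VB - {j'}) \<union> {j}. pb i) \<le> B
       \<and> can_win_by alpha (\<lambda>_. 1) C {..<n} tau cstar ((VB - {j'}) \<union> {j})"
proof -
  have same_list: "tau j = tau j'" and cheaper: "pb j \<le> pb j'"
    using dom by (auto simp: dominated_def)
  have "finite VB"
    using VB_sub finite_subset by blast
  then have "(\<Sum>i\<in>insert j (VB - {j'}). pb i) \<le> B"
    using sum_exchange_le[of VB j' j pb] j'_in j_notin cheaper VB_budget by auto
  moreover have "can_win_by alpha (\<lambda>_. 1) C {..<n} tau cstar (insert j (VB - {j'}))"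
    using can_win_by_exchange[OF VB_win] VB_sub j'_in j_in j_notin same_list by auto
  ultimately show ?thesis
    using VB_sub j_in j_notin by auto
qed

end
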